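(* Let $R$ satisfy the assumptions in the context and fix $j\in\llbracket 1,m_x\rrbracket$. Suppose $N^*_{j-\frac12,k-\frac12}\ge 0$ for all $k\in\llbracket1,m_y\rrbracket$, and set $U^*_{j-\frac12,k-\frac12}=\varepsilon\ln N^*_{j-\frac12,k-\frac12}$ (with the convention $\exp(U^*/\varepsilon)=0$ when $N^*=0$). Then: (i) the equation $$\rho=\Delta y\sum_{k=1}^{m_y}\exp\Big(\frac{U^*_{j-\frac12,k-\frac12}+\Delta t\,R(y_{k-\frac12},\rho)}{\varepsilon}\Big)$$ has a unique solution $\rho=\rho^{h+1}_{j-\frac12}\in[0,\infty)$; consequently the scheme $U^{h+1}_{j-\frac12,k-\frac12}=U^*_{j-\frac12,k-\frac12}+\Delta t\,R(y_{k-\frac12},\rho^{h+1}_{j-\frac12})$, $N^{h+1}_{j-\frac12,k-\frac12}=\exp(U^{h+1}_{j-\frac12,k-\frac12}/\varepsilon)$, admits a unique solution, and it satisfies $N^{h+1}_{j-\frac12,k-\frac12}\ge 0$ for all $k$ and $\rho^{h+1}_{j-\frac12}=\Delta y\sum_{k}N^{h+1}_{j-\frac12,k-\frac12}$; (ii) if moreover $0\le \rho^*_{j-\frac12}:=\Delta y\sum_{k=1}^{m_y}N^*_{j-\frac12,k-\frac12}\le\rho_M$, then $0\le\rho^{h+1}_{j-\frac12}\le\rho_M$.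
   Context: Fix $Y>0$, integers $m_x,m_y\ge1$, $\Delta y=Y/m_y$, $y_{k-\frac12}=(k-\frac12)\Delta y$, $\Delta t>0$, $\varepsilon>0$, and $\rho_M\in(0,\infty)$. The function $R:[0,Y]\times[0,\infty)\to\mathbb{R}$ is smooth and bounded and satisfies $R(Y,0)=0$, $R(0,\rho_M)=0$, $\partial_\rho R(y,\rho)<0$ for all $(y,\rho)$, and $\partial_y R(y,\rho)<0$ for $y\in(0,Y]$. The scheme above is the implicit time discretisation of the reaction step $\partial_t u=R(y,\rho)$, $\rho=\int_0^Y e^{u/\varepsilon}dy$, with $n=e^{u/\varepsilon}$. *)

theory Defs
  imports "HOL-Analysis.Analysis"
begin

text \<open>Smoothness (C-infinity) of a real function of two real variables on a set S:
  f belongs to a family of functions, each continuous on S and (Frechet) differentiable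
  within S with both partial derivatives again in the family.\<close>
definition smooth2_on :: "(real \<times> real) set \<Rightarrow> (real \<times> real \<Rightarrow> real) \<Rightarrow> bool" where
  "smooth2_on S f \<longleftrightarrow>
     (\<exists>F. f \<in> F \<and>
        (\<forall>g\<in>F. continuous_on S g \<and>
           (\<exists>gy gr. gy \<in> F \<and> gr \<in> F \<and>
              (\<forall>p\<in>S. (g has_derivative (\<lambda>(a, b). gy p * a + gr p * b)) (at p within S)))))"

text \<open>exp((U + r)/eps) with U = eps * ln n, using the convention exp(U/eps) = 0 when n = 0.\<close>
definition expU :: "real \<Rightarrow> real \<Rightarrow> real \<Rightarrow> real" where
  "expU eps n r = (if n = 0 then 0 else exp ((eps * ln n + r) / eps))"

end

theory Submission
  imports Defs
begin

text \<open>Writing the scheme as the fixed-point problem \<open>\<rho> = G \<rho>\<close> with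
  \<open>G \<rho> = \<Delta>y \<Sum>\<^sub>k N\<^sup>*\<^sub>k exp (\<Delta>t R(y\<^sub>k, \<rho>) / \<epsilon>)\<close>: since \<open>R\<close> is
  decreasing in \<open>\<rho>\<close>, continuous and bounded, \<open>G\<close> is a continuous, nonincreasing map of
  \<open>[0, \<infinity>)\<close> into a bounded interval \<open>[0, M]\<close>, so \<open>\<rho> - G \<rho>\<close> has exactly one zero there.
  Since \<open>R\<close> is decreasing in \<open>y\<close> and \<open>R(0, \<rho>\<^sub>M) = 0\<close>, every exponent is nonpositive beyond
  \<open>\<rho>\<^sub>M\<close>; then \<open>G \<rho> \<le> \<rho>\<^sup>* \<le> \<rho>\<^sub>M\<close>, so no fixed point lies beyond \<open>\<rho>\<^sub>M\<close>.\<close>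

lemma expU_eq:
  assumes "eps > 0" "n \<ge> 0"
  shows "expU eps n r = n * exp (r / eps)"
proof (cases "n = 0")
  case False
  then have "n > 0" using assms by simp
  moreover have "(eps * ln n + r) / eps = ln n + r / eps" using assms by (simp add: field_simps)
  ultimately show ?thesis by (simp add: expU_def exp_add)
qed (simp add: expU_def)

lemma smooth2_on_imp_continuous_on: "smooth2_on S f \<Longrightarrow> continuous_on S f"
  unfolding smooth2_on_def by blast

lemma continuous_on_slice_snd:
  assumes "continuous_on (A \<times> B) (\<lambda>(x, y). g x y)" "x \<in> A"
  shows "continuous_on B (g x)"
proof -
  have "continuous_on B (\<lambda>y. (\<lambda>(x, y). g x y) (x, y))"
    by (rule continuous_on_compose2[OF assms(1)]) (use assms(2) in \<open>auto intro!: continuous_intros\<close>)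
  then show ?thesis by simp
qed

lemma continuous_on_slice_fst:
  assumes "continuous_on (A \<times> B) (\<lambda>(x, y). g x y)" "y \<in> B"
  shows "continuous_on A (\<lambda>x. g x y)"
proof -
  have "continuous_on A (\<lambda>x. (\<lambda>(x, y). g x y) (x, y))"
    by (rule continuous_on_compose2[OF assms(1)]) (use assms(2) in \<open>auto intro!: continuous_intros\<close>)
  then show ?thesis by simp
qed

lemma DERIV_within_neg_imp_decreasing:
  fixes f :: "real \<Rightarrow> real"
  assumes "a < b" "continuous_on {a..b} f" "{a<..<b} \<subseteq> interior S"
    and "\<And>x. a < x \<Longrightarrow> x < b \<Longrightarrow> \<exists>d. (f has_real_derivative d) (at x within S) \<and> d < 0"
  shows "f b < f a"
proof (rule DERIV_neg_imp_decreasing_open[OF assms(1) _ assms(2)])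
  fix x assume x: "a < x" "x < b"
  then have "at x within S = at x"
    using assms(3) by (intro at_within_interior) auto
  then show "\<exists>d. (f has_real_derivative d) (at x) \<and> d < 0"
    using assms(4)[OF x] by metis
qed

lemma DERIV_within_atLeast_neg_imp_nonincreasing:
  fixes f :: "real \<Rightarrow> real"
  assumes cont: "continuous_on {a..} f"
    and deriv: "\<And>x. a < x \<Longrightarrow> \<exists>d. (f has_real_derivative d) (at x within {a..}) \<and> d < 0"
    and "a \<le> x" "x \<le> y"
  shows "f y \<le> f x"
proof (cases "x = y")
  case False
  then have "x < y" using \<open>x \<le> y\<close> by simp
  moreover have "continuous_on {x..y} f"
    by (rule continuous_on_subset[OF cont]) (use \<open>a \<le> x\<close> in auto)
  moreover have "{x<..<y} \<subseteq> interior {a..}" using \<open>a \<le> x\<close> by auto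
  moreover have "\<exists>d. (f has_real_derivative d) (at z within {a..}) \<and> d < 0"
    if "x < z" "z < y" for z
    using deriv that \<open>a \<le> x\<close> by simp
  ultimately have "f y < f x" by (rule DERIV_within_neg_imp_decreasing)
  then show ?thesis by simp
qed simp

lemma DERIV_within_atLeastAtMost_neg_imp_decreasing:
  fixes f :: "real \<Rightarrow> real"
  assumes cont: "continuous_on {a..b} f"
    and deriv: "\<And>x. a < x \<Longrightarrow> x < b \<Longrightarrow>
                  \<exists>d. (f has_real_derivative d) (at x within {a..b}) \<and> d < 0"
    and "a \<le> x" "x < y" "y \<le> b"
  shows "f y < f x"
proof (rule DERIV_within_neg_imp_decreasing[of x y f "{a..b}"])
  show "continuous_on {x..y} f"
    by (rule continuous_on_subset[OF cont]) (use assms(3-5) in auto)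
  show "{x<..<y} \<subseteq> interior {a..b}" using assms(3-5) by auto
  fix z assume "x < z" "z < y"
  then show "\<exists>d. (f has_real_derivative d) (at z within {a..b}) \<and> d < 0"
    using deriv assms(3-5) by simp
qed fact

lemma cell_midpoint_in_interval:
  assumes "Y > 0" "dy = Y / real my" "k \<in> {1..my}"
  shows "(real k - 1/2) * dy \<in> {0<..<Y}"
proof -
  have "1 \<le> real k" "real k \<le> real my" "dy > 0" using assms by auto
  moreover have "real my * dy = Y" using assms by auto
  ultimately show ?thesis
    by (auto intro!: mult_pos_pos)
qed

lemma reaction_rate_at_interior_point:
  fixes R :: "real \<Rightarrow> real \<Rightarrow> real"
  assumes cont: "continuous_on ({0..Y} \<times> {0..}) (\<lambda>(y, r). R y r)"
    and R_drho: "\<forall>y\<in>{0..Y}. \<forall>r\<ge>0. \<exists>d.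
                   ((\<lambda>s. R y s) has_real_derivative d) (at r within {0..}) \<and> d < 0"
    and R_dy: "\<forall>y\<in>{0<..Y}. \<forall>r\<ge>0. \<exists>d.
                   ((\<lambda>z. R z r) has_real_derivative d) (at y within {0..Y}) \<and> d < 0"
    and R_0M: "R 0 rhoM = 0" and rhoM: "0 \<le> rhoM"
    and y: "y \<in> {0<..<Y}"
  shows "continuous_on {0..} (R y)"
    and "\<And>a b. 0 \<le> a \<Longrightarrow> a \<le> b \<Longrightarrow> R y b \<le> R y a"
    and "R y rhoM \<le> 0"
proof -
  show R_cont: "continuous_on {0..} (R y)"
    by (rule continuous_on_slice_snd[OF cont]) (use y in simp)
  show "R y b \<le> R y a" if "0 \<le> a" "a \<le> b" for a b
    using DERIV_within_atLeast_neg_imp_nonincreasing[OF R_cont _ that] R_drho y by simp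
  have "continuous_on {0..Y} (\<lambda>z. R z rhoM)"
    by (rule continuous_on_slice_fst[OF cont]) (use rhoM in simp)
  moreover have "\<exists>d. ((\<lambda>z. R z rhoM) has_real_derivative d) (at x within {0..Y}) \<and> d < 0"
    if "0 < x" "x < Y" for x
    using R_dy[rule_format, of x rhoM] that rhoM by simp
  ultimately have "R y rhoM < R 0 rhoM"
    by (rule DERIV_within_atLeastAtMost_neg_imp_decreasing) (use y in auto)
  with R_0M show "R y rhoM \<le> 0" by simp
qed

lemma unique_fixpoint_of_antitone_bounded:
  fixes G :: "real \<Rightarrow> real"
  assumes cont: "continuous_on {0..} G"
    and bounds: "\<And>r. 0 \<le> r \<Longrightarrow> 0 \<le> G r \<and> G r \<le> M"
    and antitone: "\<And>a b. 0 \<le> a \<Longrightarrow> a \<le> b \<Longrightarrow> G b \<le> G a"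
  shows "\<exists>!r. 0 \<le> r \<and> r = G r"
proof (rule ex_ex1I)
  have M: "0 \<le> M" using bounds[of 0] by simp
  have "continuous_on {0..M} (\<lambda>r. r - G r)"
    using cont by (auto intro!: continuous_intros elim: continuous_on_subset)
  moreover have "0 - G 0 \<le> 0" "0 \<le> M - G M" using bounds M by auto
  ultimately show "\<exists>r. 0 \<le> r \<and> r = G r"
    using IVT'[of "\<lambda>r. r - G r" 0 0 M] M by auto
next
  fix a b assume "0 \<le> a \<and> a = G a" "0 \<le> b \<and> b = G b"
  then show "a = b" using antitone[of a b] antitone[of b a] by linarith
qed

lemma unique_fixpoint_weighted_exp_sum:
  fixes w :: "'a \<Rightarrow> real" and y :: "'a \<Rightarrow> 'b" and g :: "'b \<Rightarrow> real \<Rightarrow> real"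
  assumes h: "0 \<le> h" and w: "\<And>k. k \<in> K \<Longrightarrow> 0 \<le> w k" and c: "0 \<le> c"
    and y: "y ` K \<subseteq> A"
    and cont: "\<And>z. z \<in> A \<Longrightarrow> continuous_on {0..} (g z)"
    and antitone: "\<And>z a b. z \<in> A \<Longrightarrow> 0 \<le> a \<Longrightarrow> a \<le> b \<Longrightarrow> g z b \<le> g z a"
    and bdd: "\<And>z r. z \<in> A \<Longrightarrow> 0 \<le> r \<Longrightarrow> g z r \<le> B"
  shows "\<exists>!r. 0 \<le> r \<and> r = h * (\<Sum>k\<in>K. w k * exp (c * g (y k) r))"
proof (rule unique_fixpoint_of_antitone_bounded)
  show "continuous_on {0..} (\<lambda>r. h * (\<Sum>k\<in>K. w k * exp (c * g (y k) r)))"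
    using y by (intro continuous_intros continuous_on_compose2[OF cont]) auto
next
  fix r :: real assume "0 \<le> r"
  then have "w k * exp (c * g (y k) r) \<le> w k * exp (c * B)" if "k \<in> K" for k
    using that y w[OF that] bdd[of "y k" r] c by (simp add: image_subset_iff mult_left_mono)
  then have "(\<Sum>k\<in>K. w k * exp (c * g (y k) r)) \<le> (\<Sum>k\<in>K. w k * exp (c * B))"
    by (rule sum_mono)
  moreover have "0 \<le> (\<Sum>k\<in>K. w k * exp (c * g (y k) r))" using w by (simp add: sum_nonneg)
  ultimately show "0 \<le> h * (\<Sum>k\<in>K. w k * exp (c * g (y k) r)) \<and>
      h * (\<Sum>k\<in>K. w k * exp (c * g (y k) r)) \<le> h * (\<Sum>k\<in>K. w k * exp (c * B))"
    using h by (simp add: mult_left_mono)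
next
  fix a b :: real assume "0 \<le> a" "a \<le> b"
  then have "w k * exp (c * g (y k) b) \<le> w k * exp (c * g (y k) a)" if "k \<in> K" for k
    using that y w[OF that] antitone[of "y k" a b] c by (simp add: image_subset_iff mult_left_mono)
  then show "h * (\<Sum>k\<in>K. w k * exp (c * g (y k) b)) \<le> h * (\<Sum>k\<in>K. w k * exp (c * g (y k) a))"
    using h by (simp add: sum_mono mult_left_mono)
qed

lemma weighted_exp_sum_fixpoint_le:
  fixes w :: "'a \<Rightarrow> real" and y :: "'a \<Rightarrow> 'b" and g :: "'b \<Rightarrow> real \<Rightarrow> real"
  assumes h: "0 \<le> h" and w: "\<And>k. k \<in> K \<Longrightarrow> 0 \<le> w k" and c: "0 \<le> c" and M: "0 \<le> M"
    and y: "y ` K \<subseteq> A"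
    and antitone: "\<And>z a b. z \<in> A \<Longrightarrow> 0 \<le> a \<Longrightarrow> a \<le> b \<Longrightarrow> g z b \<le> g z a"
    and nonpos: "\<And>z. z \<in> A \<Longrightarrow> g z M \<le> 0"
    and mass: "h * sum w K \<le> M"
    and fixpoint: "r = h * (\<Sum>k\<in>K. w k * exp (c * g (y k) r))"
  shows "r \<le> M"
proof (rule ccontr)
  assume "\<not> r \<le> M"
  then have "w k * exp (c * g (y k) r) \<le> w k" if "k \<in> K" for k
    using that y w[OF that] antitone[of "y k" M r] nonpos[of "y k"] c M
    by (simp add: image_subset_iff mult_nonneg_nonpos mult_left_le)
  then have "r \<le> h * sum w K"
    by (subst fixpoint) (use h in \<open>simp add: sum_mono mult_left_mono\<close>)
  with mass \<open>\<not> r \<le> M\<close> show False by simp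
qed

theorem propositionA2:
  fixes Y dy dt eps rhoM :: real and mx my j :: nat
    and R :: "real \<Rightarrow> real \<Rightarrow> real"
    and Nstar :: "nat \<Rightarrow> nat \<Rightarrow> real"
  assumes Y: "Y > 0" and mx: "mx \<ge> 1" and my: "my \<ge> 1"
    and dy: "dy = Y / real my"
    and dt: "dt > 0" and eps: "eps > 0" and rhoM: "rhoM > 0"
    and R_smooth: "smooth2_on ({0..Y} \<times> {0..}) (\<lambda>(y, r). R y r)"
    and R_bdd: "\<exists>B. \<forall>y\<in>{0..Y}. \<forall>r\<ge>0. \<bar>R y r\<bar> \<le> B"
    and R_Y0: "R Y 0 = 0" and R_0M: "R 0 rhoM = 0"
    and R_drho: "\<forall>y\<in>{0..Y}. \<forall>r\<ge>0. \<exists>d.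
                   ((\<lambda>s. R y s) has_real_derivative d) (at r within {0..}) \<and> d < 0"
    and R_dy: "\<forall>y\<in>{0<..Y}. \<forall>r\<ge>0. \<exists>d.
                   ((\<lambda>z. R z r) has_real_derivative d) (at y within {0..Y}) \<and> d < 0"
    and j: "1 \<le> j" "j \<le> mx"
    and Nstar_nn: "\<forall>k\<in>{1..my}. Nstar j k \<ge> 0"
  shows "(\<exists>!rho. rho \<ge> 0 \<and>
            rho = dy * (\<Sum>k=1..my. expU eps (Nstar j k) (dt * R ((real k - 1/2) * dy) rho)))
       \<and> (\<forall>rho. rho \<ge> 0 \<and>
            rho = dy * (\<Sum>k=1..my. expU eps (Nstar j k) (dt * R ((real k - 1/2) * dy) rho))
          \<longrightarrow> (\<forall>k\<in>{1..my}. expU eps (Nstar j k) (dt * R ((real k - 1/2) * dy) rho) \<ge> 0)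
            \<and> (0 \<le> dy * (\<Sum>k=1..my. Nstar j k) \<and> dy * (\<Sum>k=1..my. Nstar j k) \<le> rhoM
                 \<longrightarrow> 0 \<le> rho \<and> rho \<le> rhoM))"
proof -
  let ?y = "\<lambda>k::nat. (real k - 1/2) * dy"
  let ?G = "\<lambda>rho. dy * (\<Sum>k=1..my. Nstar j k * exp (dt / eps * R (?y k) rho))"
  obtain B where B: "\<forall>y\<in>{0..Y}. \<forall>r\<ge>0. \<bar>R y r\<bar> \<le> B" using R_bdd by blast
  have cont: "continuous_on ({0..Y} \<times> {0..}) (\<lambda>(y, r). R y r)"
    using R_smooth by (rule smooth2_on_imp_continuous_on)
  have mid: "?y ` {1..my} \<subseteq> {0<..<Y}"
    using cell_midpoint_in_interval[OF Y dy] by blast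
  note R_props = reaction_rate_at_interior_point[OF cont R_drho R_dy R_0M less_imp_le[OF rhoM]]
  have R_upper: "R y r \<le> B" if "y \<in> {0<..<Y}" "0 \<le> r" for y r
    using B[rule_format, of y r] that by (simp add: abs_le_iff)
  have scheme_eq: "(\<Sum>k=1..my. expU eps (Nstar j k) (dt * R (?y k) rho))
      = (\<Sum>k=1..my. Nstar j k * exp (dt / eps * R (?y k) rho))" for rho
    using Nstar_nn eps by (auto simp: expU_eq intro!: sum.cong)
  have dy_nonneg: "0 \<le> dy" and c_nonneg: "0 \<le> dt / eps" using Y dy dt eps by simp_all
  have unique: "\<exists>!rho. 0 \<le> rho \<and> rho = ?G rho"
    using Nstar_nn by (intro unique_fixpoint_weighted_exp_sum[OF dy_nonneg _ c_nonneg mid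
        R_props(1,2) R_upper]) simp
  have bounded: "rho \<le> rhoM"
    if "rho = ?G rho"
      "dy * sum (Nstar j) {1..my} \<le> rhoM" for rho
    using Nstar_nn
    by (intro weighted_exp_sum_fixpoint_le[OF dy_nonneg _ c_nonneg _ mid R_props(2,3)
        that(2,1)]) (use rhoM in simp_all)
  have nonneg: "0 \<le> expU eps (Nstar j k) r" if "k \<in> {1..my}" for k r
    using that Nstar_nn eps by (simp add: expU_eq)
  show ?thesis
    unfolding scheme_eq
  proof (intro conjI allI impI ballI)
    fix rho k assume "k \<in> {1..my}"
    then show "0 \<le> expU eps (Nstar j k) (dt * R (?y k) rho)" by (rule nonneg)
  next
    fix rho
    assume fp: "0 \<le> rho \<and> rho = ?G rho"
      and mass: "0 \<le> dy * sum (Nstar j) {1..my} \<and> dy * sum (Nstar j) {1..my} \<le> rhoM"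
    show "0 \<le> rho" using fp by (rule conjunct1)
    show "rho \<le> rhoM" by (rule bounded[OF conjunct2[OF fp] conjunct2[OF mass]])
  qed (fact unique)
qed

end
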